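(* Let $k\ge 2$ be an integer and $D$ a strongly connected digraph with no directed cycle of length congruent to $1$ modulo $k$. Let $T$ be a DFS tree of $D$ rooted at $r$, of length $t$, with levels $V_0,\ldots,V_t$. For $s\in\{0,1,\ldots,k-1\}$ let $U_s=\bigcup_{0\le i\le t,\ i\equiv s \pmod k} V_i$. Then $U_0,\ldots,U_{k-1}$ form a partition of $V(D)$ into acyclic sets.
   Context: Digraphs are finite and loopless; paths and cycles are directed; $l(\cdot)$ denotes length. A DFS tree $T$ of a strongly connected digraph $D$ rooted at $r$ is the spanning out-branching produced by a depth-first search started at $r$. $P_u$ is the unique $ru$-path in $T$; the length $t$ of $T$ is the length of a longest path in $T$; the levels are $V_i=\{u: l(P_u)=i\}$, $0\le i\le t$. A set of vertices is acyclic if it induces no directed cycle. *)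

theory Defs
  imports Main
begin

definition digraph :: "'a set \<Rightarrow> ('a \<times> 'a) set \<Rightarrow> bool" where
  "digraph V E \<longleftrightarrow> finite V \<and> E \<subseteq> V \<times> V \<and> (\<forall>v. (v, v) \<notin> E)"

definition strongly_connected :: "'a set \<Rightarrow> ('a \<times> 'a) set \<Rightarrow> bool" where
  "strongly_connected V E \<longleftrightarrow> (\<forall>u\<in>V. \<forall>v\<in>V. (u, v) \<in> E\<^sup>*)"

text \<open>A directed cycle, given by its list of (distinct) vertices in cyclic order;
its length is the number of vertices (= number of arcs).\<close>

definition is_cycle :: "('a \<times> 'a) set \<Rightarrow> 'a list \<Rightarrow> bool" where
  "is_cycle E vs \<longleftrightarrow> vs \<noteq> [] \<and> distinct vs \<and>
     (\<forall>i < length vs. (vs ! i, vs ! ((i + 1) mod length vs)) \<in> E)"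

definition acyclic_set :: "('a \<times> 'a) set \<Rightarrow> 'a set \<Rightarrow> bool" where
  "acyclic_set E A \<longleftrightarrow> \<not> (\<exists>vs. is_cycle E vs \<and> set vs \<subseteq> A)"

text \<open>Execution of a depth-first search started at r: states are
(stack, visited vertices, tree arcs).\<close>

inductive dfs_state :: "('a \<times> 'a) set \<Rightarrow> 'a \<Rightarrow> 'a list \<Rightarrow> 'a set \<Rightarrow> ('a \<times> 'a) set \<Rightarrow> bool"
  for E r where
  init: "dfs_state E r [r] {r} {}"
| push: "dfs_state E r (u # s) vis T \<Longrightarrow> (u, v) \<in> E \<Longrightarrow> v \<notin> vis \<Longrightarrow>
         dfs_state E r (v # u # s) (insert v vis) (insert (u, v) T)"
| pop: "dfs_state E r (u # s) vis T \<Longrightarrow> (\<forall>v. (u, v) \<in> E \<longrightarrow> v \<in> vis) \<Longrightarrow>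
        dfs_state E r s vis T"

definition dfs_tree :: "'a set \<Rightarrow> ('a \<times> 'a) set \<Rightarrow> 'a \<Rightarrow> ('a \<times> 'a) set \<Rightarrow> bool" where
  "dfs_tree V E r T \<longleftrightarrow> r \<in> V \<and> dfs_state E r [] V T"

definition tree_depth :: "('a \<times> 'a) set \<Rightarrow> 'a \<Rightarrow> 'a \<Rightarrow> nat" where
  "tree_depth T r u = (LEAST n. (r, u) \<in> T ^^ n)"

text \<open>Length t of T: length of a longest path in T, i.e. the maximal depth.\<close>

definition tree_length :: "'a set \<Rightarrow> ('a \<times> 'a) set \<Rightarrow> 'a \<Rightarrow> nat" where
  "tree_length V T r = Max (tree_depth T r ` V)"

definition level :: "'a set \<Rightarrow> ('a \<times> 'a) set \<Rightarrow> 'a \<Rightarrow> nat \<Rightarrow> 'a set" where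
  "level V T r i = {u \<in> V. tree_depth T r u = i}"

definition level_class :: "'a set \<Rightarrow> ('a \<times> 'a) set \<Rightarrow> 'a \<Rightarrow> nat \<Rightarrow> nat \<Rightarrow> 'a set" where
  "level_class V T r k s =
     (\<Union>i \<in> {i. i \<le> tree_length V T r \<and> i mod k = s mod k}. level V T r i)"

end

theory Submission
  imports Defs
begin

text \<open>At the end of a depth-first search every arc \<open>(u, v)\<close> either leads back to a tree
ancestor \<open>v\<close> of \<open>u\<close> or to a vertex that finished before \<open>u\<close>; finishing order cannot
decrease all the way around a cycle, so every cycle contains a back arc \<open>(a, b)\<close>. The
depth is a grading of the tree, so the tree path from \<open>b\<close> to \<open>a\<close> has length
\<open>m = depth a - depth b\<close>. If the cycle lies in one class \<open>U\<^sub>s\<close>, then \<open>k\<close> divides \<open>m\<close>,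
and the tree path closed by the back arc is a cycle of length \<open>m + 1 \<equiv> 1 (mod k)\<close>.\<close>

lemma dfs_state_subset:
  "dfs_state E r s vis T \<Longrightarrow> r \<in> vis \<and> set s \<subseteq> vis \<and> T \<subseteq> E \<inter> vis \<times> vis"
  by (induction rule: dfs_state.induct) auto

lemma dfs_state_reachable:
  assumes "dfs_state E r s vis T"
  shows "\<forall>v \<in> vis. (r, v) \<in> T\<^sup>*"
  using assms
proof (induction rule: dfs_state.induct)
  case (push u s vis T v)
  have "T\<^sup>* \<subseteq> (insert (u, v) T)\<^sup>*"
    by (rule rtrancl_mono) blast
  moreover have "u \<in> vis"
    using dfs_state_subset[OF push.hyps(1)] by simp
  ultimately show ?case
    using push.IH by (auto intro: rtrancl_into_rtrancl)
qed simp_all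

lemma dfs_state_graded:
  assumes "dfs_state E r s vis T"
  shows "\<exists>d. d r = (0::nat) \<and> (\<forall>(a, b) \<in> T. d b = Suc (d a))"
  using assms
proof (induction rule: dfs_state.induct)
  case (push u s vis T v)
  then obtain d where d: "d r = 0" "\<forall>(a, b) \<in> T. d b = Suc (d a)"
    by blast
  have "r \<in> vis" "u \<in> vis" "T \<subseteq> vis \<times> vis"
    using dfs_state_subset[OF push.hyps(1)] by auto
  with d \<open>v \<notin> vis\<close> show ?case
    by (intro exI[of _ "d(v := Suc (d u))"]) auto
qed auto

lemma dfs_state_stack_ancestors:
  "dfs_state E r s vis T \<Longrightarrow> sorted_wrt (\<lambda>x y. (y, x) \<in> T\<^sup>*) s"
proof (induction rule: dfs_state.induct)
  case (push u s vis T v)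
  have mono: "T\<^sup>* \<subseteq> (insert (u, v) T)\<^sup>*"
    by (rule rtrancl_mono) blast
  have "sorted_wrt (\<lambda>x y. (y, x) \<in> (insert (u, v) T)\<^sup>*) (u # s)"
    by (rule sorted_wrt_mono_rel[OF _ push.IH]) (use mono in blast)
  moreover have "(y, v) \<in> (insert (u, v) T)\<^sup>*" if "y \<in> set (u # s)" for y
  proof -
    have "(y, u) \<in> (insert (u, v) T)\<^sup>*"
      using that push.IH mono by auto
    then show ?thesis
      by (rule rtrancl_into_rtrancl) simp
  qed
  ultimately show ?case
    by simp
qed simp_all

text \<open>The vertices of \<open>vis - set s\<close> are the finished ones; \<open>f\<close> ranks them in reverse
order of finishing.\<close>

lemma dfs_state_finished_arcs:
  assumes "dfs_state E r s vis T"
  shows "\<exists>f :: 'a \<Rightarrow> nat. \<forall>u \<in> vis - set s. \<forall>v. (u, v) \<in> E \<longrightarrow>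
           (v, u) \<in> T\<^sup>* \<or> (v \<in> vis - set s \<and> f u < f v)"
  using assms
proof (induction rule: dfs_state.induct)
  case (push u s vis T v)
  obtain f :: "'a \<Rightarrow> nat" where f: "\<forall>w \<in> vis - set (u # s). \<forall>x. (w, x) \<in> E \<longrightarrow>
      (x, w) \<in> T\<^sup>* \<or> (x \<in> vis - set (u # s) \<and> f w < f x)"
    using push.IH by blast
  have mono: "T\<^sup>* \<subseteq> (insert (u, v) T)\<^sup>*"
    by (rule rtrancl_mono) blast
  have finished: "insert v vis - set (v # u # s) = vis - set (u # s)"
    using \<open>v \<notin> vis\<close> by auto
  have "(x, w) \<in> (insert (u, v) T)\<^sup>* \<or> (x \<in> vis - set (u # s) \<and> f w < f x)"
    if "w \<in> vis - set (u # s)" "(w, x) \<in> E" for w x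
    using f that mono by blast
  then show ?case
    unfolding finished by (intro exI[of _ f]) blast
next
  case (pop u s vis T)
  obtain f :: "'a \<Rightarrow> nat" where f: "\<forall>w \<in> vis - set (u # s). \<forall>x. (w, x) \<in> E \<longrightarrow>
      (x, w) \<in> T\<^sup>* \<or> (x \<in> vis - set (u # s) \<and> f w < f x)"
    using pop.IH by blast
  have ancestor: "(x, u) \<in> T\<^sup>*" if "x \<in> set (u # s)" for x
    using that dfs_state_stack_ancestors[OF pop.hyps(1)] by auto
  let ?f = "\<lambda>w. if w = u then 0 else Suc (f w)"
  have "(x, w) \<in> T\<^sup>* \<or> (x \<in> vis - set s \<and> ?f w < ?f x)"
    if "w \<in> vis - set s" "(w, x) \<in> E" for w x
  proof (cases "w = u")
    case True
    then show ?thesis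
      using that pop.hyps(2) ancestor[of x] by auto
  next
    case False
    then show ?thesis
      using that f by auto
  qed
  then show ?case
    by (intro exI[of _ ?f]) blast
qed simp

lemma relpow_graded:
  assumes graded: "\<forall>(a, b) \<in> T. d b = Suc (d a)"
  shows "(x, y) \<in> T ^^ m \<Longrightarrow> d y = d x + m"
proof (induction m arbitrary: y)
  case (Suc m)
  then obtain z where "(x, z) \<in> T ^^ m" "(z, y) \<in> T"
    by auto
  with Suc.IH graded show ?case
    by auto
qed simp

lemma tree_depth_graded:
  assumes "d r = 0" "\<forall>(a, b) \<in> T. d b = Suc (d a)" "(r, u) \<in> T\<^sup>*"
  shows "tree_depth T r u = d u"
proof -
  have length_eq: "m = d u" if "(r, u) \<in> T ^^ m" for m
    using relpow_graded[OF assms(2) that] assms(1) by simp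
  obtain m where "(r, u) \<in> T ^^ m"
    using assms(3) rtrancl_power by blast
  with length_eq have "(r, u) \<in> T ^^ d u"
    by simp
  then show ?thesis
    unfolding tree_depth_def by (rule Least_equality) (use length_eq in simp)
qed

lemma is_cycle_map_upt:
  assumes "inj_on g {..m}" "\<forall>i < m. (g i, g (Suc i)) \<in> E" "(g m, g 0) \<in> E"
  shows "is_cycle E (map g [0..<Suc m])"
proof -
  have "distinct (map g [0..<Suc m])"
    using assms(1) by (simp add: distinct_map atLeast0LessThan lessThan_Suc_atMost del: upt_Suc)
  moreover have "(g i, g ((i + 1) mod Suc m)) \<in> E" if "i < Suc m" for i
    using that assms(2,3) by (cases "i = m") simp_all
  ultimately show ?thesis
    unfolding is_cycle_def by (simp del: upt_Suc)
qed

text \<open>The grading makes the vertices of the tree path distinct.\<close>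

lemma back_arc_cycle:
  assumes "\<forall>(a, b) \<in> T. d b = Suc (d a)" "T \<subseteq> E" "(a, b) \<in> E" "(b, a) \<in> T ^^ m"
  shows "\<exists>vs. is_cycle E vs \<and> length vs = Suc m"
proof -
  obtain g where g: "g 0 = b" "g m = a" "\<forall>i < m. (g i, g (Suc i)) \<in> T"
    using assms(4) unfolding relpow_fun_conv by blast
  have "d (g i) = d b + i" if "i \<le> m" for i
    using that
  proof (induction i)
    case (Suc i)
    then have "(g i, g (Suc i)) \<in> T"
      using g(3) by simp
    with Suc assms(1) show ?case
      by auto
  qed (simp add: g(1))
  then have "inj_on g {..m}"
    by (intro inj_onI) (metis atMost_iff add_left_cancel)
  with g assms(2,3) have "is_cycle E (map g [0..<Suc m])"
    by (intro is_cycle_map_upt) auto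
  then show ?thesis
    by (intro exI[of _ "map g [0..<Suc m]"]) simp
qed

lemma is_cycle_arc_not_increasing:
  fixes f :: "'a \<Rightarrow> 'b::linorder"
  assumes "is_cycle E vs"
  shows "\<exists>a \<in> set vs. \<exists>b \<in> set vs. (a, b) \<in> E \<and> \<not> f a < f b"
proof -
  have "vs \<noteq> []"
    using assms unfolding is_cycle_def by blast
  then have "Max (f ` set vs) \<in> f ` set vs"
    by (intro Max_in) simp_all
  then obtain a where a: "a \<in> set vs" "f a = Max (f ` set vs)"
    by auto
  then obtain i where i: "i < length vs" "vs ! i = a"
    by (auto simp: in_set_conv_nth)
  let ?b = "vs ! ((i + 1) mod length vs)"
  have "?b \<in> set vs" "(a, ?b) \<in> E"
    using assms i unfolding is_cycle_def by auto
  moreover have "\<not> f a < f ?b"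
    using a \<open>?b \<in> set vs\<close> by (simp add: not_less)
  ultimately show ?thesis
    using a(1) by blast
qed

lemma mem_level_class_iff:
  "x \<in> level_class V T r k s \<longleftrightarrow>
     x \<in> V \<and> tree_depth T r x \<le> tree_length V T r \<and> tree_depth T r x mod k = s mod k"
  unfolding level_class_def level_def by auto

lemma dfs_tree_cycle_back_arc:
  assumes "dfs_tree V E r T" "is_cycle E vs" "set vs \<subseteq> V"
  shows "\<exists>a \<in> set vs. \<exists>b \<in> set vs. (a, b) \<in> E \<and> (b, a) \<in> T\<^sup>*"
proof -
  have "dfs_state E r [] V T"
    using assms(1) unfolding dfs_tree_def by blast
  then obtain f :: "'a \<Rightarrow> nat" where f: "\<forall>u \<in> V - set []. \<forall>v. (u, v) \<in> E \<longrightarrow>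
      (v, u) \<in> T\<^sup>* \<or> (v \<in> V - set [] \<and> f u < f v)"
    by (rule exE[OF dfs_state_finished_arcs])
  obtain a b where ab: "a \<in> set vs" "b \<in> set vs" "(a, b) \<in> E" "\<not> f a < f b"
    using is_cycle_arc_not_increasing[OF assms(2)] by blast
  then have "(b, a) \<in> T\<^sup>*"
    using f assms(3) by auto
  with ab show ?thesis
    by blast
qed

lemma acyclic_level_class:
  assumes "k \<ge> 2" and no_cycle_1: "\<forall>vs. is_cycle E vs \<longrightarrow> length vs mod k \<noteq> 1"
    and dfs_tree: "dfs_tree V E r T"
  shows "acyclic_set E (level_class V T r k s)"
  unfolding acyclic_set_def
proof
  assume "\<exists>vs. is_cycle E vs \<and> set vs \<subseteq> level_class V T r k s"
  then obtain vs where cycle: "is_cycle E vs" and in_class: "set vs \<subseteq> level_class V T r k s"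
    by blast
  then have "set vs \<subseteq> V"
    by (auto simp: mem_level_class_iff)
  then obtain a b where "a \<in> set vs" "b \<in> set vs" and back_arc: "(a, b) \<in> E" "(b, a) \<in> T\<^sup>*"
    using dfs_tree_cycle_back_arc[OF dfs_tree cycle] by blast
  then have a: "a \<in> level_class V T r k s" and b: "b \<in> level_class V T r k s"
    using in_class by auto
  have dfs: "dfs_state E r [] V T"
    using dfs_tree unfolding dfs_tree_def by blast
  have "T \<subseteq> E" and reach: "\<forall>v \<in> V. (r, v) \<in> T\<^sup>*"
    using dfs_state_subset[OF dfs] dfs_state_reachable[OF dfs] by auto
  obtain d where d: "d r = 0" "\<forall>(a, b) \<in> T. d b = Suc (d a)"
    using dfs_state_graded[OF dfs] by blast
  have depth: "tree_depth T r x = d x" if "x \<in> V" for x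
    using tree_depth_graded[OF d] reach that by blast
  obtain m where m: "(b, a) \<in> T ^^ m"
    using back_arc(2) rtrancl_power by blast
  have "a \<in> V" "b \<in> V"
    using a b by (auto simp: mem_level_class_iff)
  then have "d a mod k = d b mod k"
    using a b by (simp add: mem_level_class_iff flip: depth)
  then have "(d b + m) mod k = d b mod k"
    using relpow_graded[OF d(2) m] by simp
  then have "k dvd m"
    by (simp add: mod_eq_dvd_iff_nat)
  with \<open>k \<ge> 2\<close> have "Suc m mod k = 1"
    by (auto simp: mod_Suc)
  moreover obtain cyc where "is_cycle E cyc" "length cyc = Suc m"
    using back_arc_cycle[OF d(2) \<open>T \<subseteq> E\<close> back_arc(1) m] by blast
  ultimately show False
    using no_cycle_1 by auto
qed

theorem mainTheorem12:
  fixes V :: "'a set" and E :: "('a \<times> 'a) set" and r :: 'a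
    and T :: "('a \<times> 'a) set" and k :: nat
  assumes "k \<ge> 2"
    and "digraph V E"
    and "strongly_connected V E"
    and "\<forall>vs. is_cycle E vs \<longrightarrow> length vs mod k \<noteq> 1"
    and "dfs_tree V E r T"
  shows "(\<Union>s<k. level_class V T r k s) = V
       \<and> (\<forall>s<k. \<forall>s'<k. s \<noteq> s' \<longrightarrow> level_class V T r k s \<inter> level_class V T r k s' = {})
       \<and> (\<forall>s<k. acyclic_set E (level_class V T r k s))"
proof (intro conjI)
  have "finite V"
    using assms(2) unfolding digraph_def by blast
  then have "u \<in> level_class V T r k (tree_depth T r u mod k)" if "u \<in> V" for u
    using that by (simp add: mem_level_class_iff tree_length_def)
  with \<open>k \<ge> 2\<close> show "(\<Union>s<k. level_class V T r k s) = V"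
    by (fastforce simp: mem_level_class_iff)
  show "\<forall>s<k. \<forall>s'<k. s \<noteq> s' \<longrightarrow> level_class V T r k s \<inter> level_class V T r k s' = {}"
    by (auto simp: mem_level_class_iff)
  show "\<forall>s<k. acyclic_set E (level_class V T r k s)"
    using acyclic_level_class[OF assms(1,4,5)] by blast
qed

end
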